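(* Let $F$ be a comparison graph on an array $A$ whose underlying undirected graph is a forest with $k$ components, each of which contains a directed Hamiltonian path. Let $H$ be the graph obtained by applying the merge step to $F$ with the list of roots of its components (in some order). If $k>1$, then $H$ has fewer than $k$ components; in fact, for any $k\ge1$, $H$ has exactly $\lceil k/2\rceil$ components.
   Context: An array is a finite sequence $A=(A[1],\dots,A[n])$ of pairwise distinct real numbers. A comparison graph on $A$ is a directed graph on $\{1,\dots,n\}$ all of whose arcs $(u,v)$ satisfy $A[u]<A[v]$. Components are connected components of the underlying undirected graph; a directed Hamiltonian path of a component is a directed path visiting each of its vertices exactly once; the root of a component is its minimum-valued vertex. Component merge of two distinct components $C,D$: set $p,q$ to the roots of $C,D$; while both are defined: if $A[p]<A[q]$ add the arc $(p,q)$ and replace $p$ by the smallest-valued out-neighbour of $p$ within $C$ (ignoring arcs added during this merge; undefined if none); otherwise add $(q,p)$ and replace $q$ analogously within $D$. Merge step with a root list $(\rho_1,\dots,\rho_k)$: component-merge the components of $\rho_{2j-1}$ and $\rho_{2j}$ for $j=1,\dots,\lfloor k/2\rfloor$. *)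

theory Defs
  imports Complex_Main
begin

text \<open>Arrays: A :: nat => real on the index set {1..n}, injective there (pairwise distinct).
Graphs: sets of arcs (u,v).\<close>

definition comparison_graph :: "nat \<Rightarrow> (nat \<Rightarrow> real) \<Rightarrow> (nat \<times> nat) set \<Rightarrow> bool" where
  "comparison_graph n A G \<longleftrightarrow> G \<subseteq> {1..n} \<times> {1..n} \<and> (\<forall>(u,v)\<in>G. A u < A v)"

definition und :: "(nat \<times> nat) set \<Rightarrow> nat \<Rightarrow> nat \<Rightarrow> bool" where
  "und G u v \<longleftrightarrow> (u,v) \<in> G \<or> (v,u) \<in> G"

definition comp :: "(nat \<times> nat) set \<Rightarrow> nat \<Rightarrow> nat set" where
  "comp G v = {u. (v,u) \<in> (G \<union> G\<inverse>)\<^sup>*}"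

definition comps :: "nat set \<Rightarrow> (nat \<times> nat) set \<Rightarrow> nat set set" where
  "comps V G = comp G ` V"

definition und_cycle :: "(nat \<times> nat) set \<Rightarrow> nat list \<Rightarrow> bool" where
  "und_cycle G xs \<longleftrightarrow> length xs \<ge> 3 \<and> distinct xs \<and>
     (\<forall>i < length xs. und G (xs ! i) (xs ! ((i + 1) mod length xs)))"

definition und_forest :: "nat set \<Rightarrow> (nat \<times> nat) set \<Rightarrow> bool" where
  "und_forest V G \<longleftrightarrow> \<not> (\<exists>xs. set xs \<subseteq> V \<and> und_cycle G xs)"

definition ham_path :: "(nat \<times> nat) set \<Rightarrow> nat set \<Rightarrow> nat list \<Rightarrow> bool" where
  "ham_path G C ps \<longleftrightarrow> distinct ps \<and> set ps = C \<and>
     (\<forall>i. i + 1 < length ps \<longrightarrow> (ps ! i, ps ! (i + 1)) \<in> G)"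

definition root :: "(nat \<Rightarrow> real) \<Rightarrow> nat set \<Rightarrow> nat" where
  "root A C = (THE r. r \<in> C \<and> (\<forall>x\<in>C. A r \<le> A x))"

definition nxt :: "(nat \<Rightarrow> real) \<Rightarrow> (nat \<times> nat) set \<Rightarrow> nat set \<Rightarrow> nat \<Rightarrow> nat option" where
  "nxt A G C p = (if \<exists>v\<in>C. (p,v) \<in> G
     then Some (THE v. v \<in> C \<and> (p,v) \<in> G \<and> (\<forall>w\<in>C. (p,w) \<in> G \<longrightarrow> A v \<le> A w))
     else None)"

text \<open>The merge loop, run with a fuel parameter; arcs are looked up in the graph G
as it was before the merge (arcs added during the merge are ignored).\<close>
fun mloop :: "(nat \<Rightarrow> real) \<Rightarrow> (nat \<times> nat) set \<Rightarrow> nat set \<Rightarrow> nat set \<Rightarrow> nat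
    \<Rightarrow> nat option \<Rightarrow> nat option \<Rightarrow> (nat \<times> nat) set" where
  "mloop A G C D 0 p q = {}"
| "mloop A G C D (Suc f) (Some p) (Some q) =
     (if A p < A q then insert (p,q) (mloop A G C D f (nxt A G C p) (Some q))
      else insert (q,p) (mloop A G C D f (Some p) (nxt A G D q)))"
| "mloop A G C D (Suc f) _ _ = {}"

text \<open>Component merge. The fuel card C + card D suffices: each pointer moves along
strictly increasing values inside its (finite) component.\<close>
definition comp_merge :: "(nat \<Rightarrow> real) \<Rightarrow> (nat \<times> nat) set \<Rightarrow> nat set \<Rightarrow> nat set \<Rightarrow> (nat \<times> nat) set" where
  "comp_merge A G C D = G \<union> mloop A G C D (card C + card D) (Some (root A C)) (Some (root A D))"

fun merge_step :: "(nat \<Rightarrow> real) \<Rightarrow> (nat \<times> nat) set \<Rightarrow> nat list \<Rightarrow> (nat \<times> nat) set" where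
  "merge_step A G (r1 # r2 # rs) = merge_step A (comp_merge A G (comp G r1) (comp G r2)) rs"
| "merge_step A G _ = G"

end

theory Submission
  imports Defs
begin

text \<open>Neither acyclicity nor the Hamiltonian paths matter for the count. Merging two
distinct components C and D adds an arc between their roots and otherwise only arcs inside
C \<union> D, so the components afterwards are C \<union> D together with the untouched ones: each merge
lowers the number of components by exactly one. The k roots lie in pairwise distinct
components, and merging C and D does not change the components of the remaining roots, so the
merge step performs k div 2 such merges and leaves k - k div 2 = \<lceil>k/2\<rceil> components.\<close>

lemma ex1_min_if_inj_on:
  fixes A :: "'a \<Rightarrow> 'b::linorder"
  assumes "finite S" "S \<noteq> {}" "inj_on A S"
  shows "\<exists>!m. m \<in> S \<and> (\<forall>x\<in>S. A m \<le> A x)"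
proof -
  obtain m where "is_arg_min A (\<lambda>x. x \<in> S) m"
    using ex_is_arg_min_if_finite[OF assms(1,2)] by blast
  then have m: "m \<in> S \<and> (\<forall>x\<in>S. A m \<le> A x)"
    by (simp add: is_arg_min_linorder)
  show ?thesis
  proof (rule ex1I[of _ m])
    show "m \<in> S \<and> (\<forall>x\<in>S. A m \<le> A x)" by (fact m)
  next
    fix m' assume m': "m' \<in> S \<and> (\<forall>x\<in>S. A m' \<le> A x)"
    with m have "A m' = A m" by (meson antisym)
    with m m' assms(3) show "m' = m" by (meson inj_onD)
  qed
qed

lemma root_in:
  assumes "finite C" "C \<noteq> {}" "inj_on A C"
  shows "root A C \<in> C"
  using theI'[OF ex1_min_if_inj_on[OF assms]] unfolding root_def by blast

lemma set_nxt_subset: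
  assumes "finite C" "inj_on A C"
  shows "set_option (nxt A G C p) \<subseteq> C"
proof (cases "\<exists>v\<in>C. (p, v) \<in> G")
  case True
  let ?S = "{v \<in> C. (p, v) \<in> G}"
  have "\<exists>!m. m \<in> ?S \<and> (\<forall>x\<in>?S. A m \<le> A x)"
    using True assms by (intro ex1_min_if_inj_on) (auto intro: inj_on_subset)
  then have "\<exists>!m. m \<in> C \<and> (p, m) \<in> G \<and> (\<forall>w\<in>C. (p, w) \<in> G \<longrightarrow> A m \<le> A w)"
    by (simp add: Ball_def imp_conjL)
  from theI'[OF this] show ?thesis
    using True by (simp add: nxt_def)
qed (simp add: nxt_def)

lemma mloop_subset:
  assumes "finite C" "inj_on A C" "finite D" "inj_on A D"
  shows "set_option p \<subseteq> C \<Longrightarrow> set_option q \<subseteq> D \<Longrightarrow> mloop A G C D f p q \<subseteq> C \<times> D \<union> D \<times> C"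
proof (induction f arbitrary: p q)
  case (Suc f)
  show ?case
  proof (cases p; cases q)
    fix x y assume pq: "p = Some x" "q = Some y"
    have "mloop A G C D f (nxt A G C x) (Some y) \<subseteq> C \<times> D \<union> D \<times> C"
      using Suc.prems pq by (intro Suc.IH set_nxt_subset[OF assms(1,2)]) simp
    moreover have "mloop A G C D f (Some x) (nxt A G D y) \<subseteq> C \<times> D \<union> D \<times> C"
      using Suc.prems pq by (intro Suc.IH set_nxt_subset[OF assms(3,4)]) simp
    ultimately show ?thesis
      using Suc.prems pq by auto
  qed simp_all
qed simp

lemma comp_merge_subset:
  assumes "finite C" "C \<noteq> {}" "inj_on A C" "finite D" "D \<noteq> {}" "inj_on A D"
  shows "comp_merge A G C D \<subseteq> G \<union> C \<times> D \<union> D \<times> C"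
  using mloop_subset[OF assms(1,3,4,6), of "Some (root A C)" "Some (root A D)"]
    root_in[OF assms(1-3)] root_in[OF assms(4-6)]
  unfolding comp_merge_def by auto

lemma root_arc_comp_merge:
  assumes "finite C" "C \<noteq> {}"
  shows "(root A C, root A D) \<in> comp_merge A G C D \<union> (comp_merge A G C D)\<inverse>"
proof -
  have "card C > 0"
    using assms by (simp add: card_gt_0_iff)
  then obtain f where "card C + card D = Suc f"
    by (metis add_gr_0 gr0_implies_Suc)
  then show ?thesis by (simp add: comp_merge_def)
qed

lemma equiv_und_rtrancl: "equiv UNIV ((G \<union> G\<inverse>)\<^sup>*)"
  by (intro equivI refl_rtrancl sym_rtrancl trans_rtrancl) (auto simp: sym_def)

lemma comp_eq_Image: "comp G v = (G \<union> G\<inverse>)\<^sup>* `` {v}"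
  by (auto simp: comp_def)

lemma in_comp_self [simp]: "v \<in> comp G v"
  by (simp add: comp_def)

lemma comp_not_empty [simp]: "comp G v \<noteq> {}"
  using in_comp_self by (metis empty_iff)

lemma comp_eq_iff: "comp G u = comp G v \<longleftrightarrow> u \<in> comp G v"
proof -
  have equiv: "equiv UNIV ((G \<union> G\<inverse>)\<^sup>*)" by (rule equiv_und_rtrancl)
  then have "comp G u = comp G v \<longleftrightarrow> (u, v) \<in> (G \<union> G\<inverse>)\<^sup>*"
    unfolding comp_eq_Image by (rule eq_equiv_class_iff) simp_all
  moreover have "sym ((G \<union> G\<inverse>)\<^sup>*)"
    using equiv by (simp add: equiv_def)
  ultimately show ?thesis
    by (auto simp: comp_def dest: symD)
qed

lemma comp_step: "(u, v) \<in> G \<union> G\<inverse> \<Longrightarrow> v \<in> comp G u"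
  by (auto simp: comp_def)

lemma comp_mono: "G \<subseteq> G' \<Longrightarrow> comp G v \<subseteq> comp G' v"
  unfolding comp_def using rtrancl_mono[of "G \<union> G\<inverse>" "G' \<union> G'\<inverse>"] by blast

lemma comp_subset:
  assumes "G \<subseteq> V \<times> V" "v \<in> V"
  shows "comp G v \<subseteq> V"
proof
  fix u assume "u \<in> comp G v"
  then have "(v, u) \<in> (G \<union> G\<inverse>)\<^sup>*" by (simp add: comp_def)
  then show "u \<in> V" by (induction rule: rtrancl_induct) (use assms in auto)
qed

lemma comp_subset_if_closed:
  assumes "G' \<subseteq> G \<union> S \<times> S" "\<And>x. x \<in> S \<Longrightarrow> comp G x \<subseteq> S"
  shows "comp G' v \<subseteq> (if v \<in> S then S else comp G v)"
proof
  fix y assume "y \<in> comp G' v"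
  then have "(v, y) \<in> (G' \<union> G'\<inverse>)\<^sup>*" by (simp add: comp_def)
  then show "y \<in> (if v \<in> S then S else comp G v)"
  proof (induction rule: rtrancl_induct)
    case (step y z)
    show ?case
    proof (cases "y \<in> S")
      case True
      then have "v \<in> S"
        using step.IH assms(2) comp_eq_iff by (metis in_comp_self subsetD)
      moreover have "(y, z) \<in> G \<union> G\<inverse> \<or> z \<in> S"
        using step.hyps(2) assms(1) by blast
      then have "z \<in> S"
        using True assms(2) comp_step by blast
      ultimately show ?thesis by simp
    next
      case False
      then have "v \<notin> S" "(y, z) \<in> G \<union> G\<inverse>"
        using step.IH step.hyps(2) assms(1) by (auto split: if_splits)
      then show ?thesis
        using step.IH comp_step comp_eq_iff by (metis (full_types))
    qed
  qed simp
qed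

lemma comp_join:
  fixes G G' :: "(nat \<times> nat) set" and c d :: nat
  defines "S \<equiv> comp G c \<union> comp G d"
  assumes mono: "G \<subseteq> G'" and new_arcs: "G' \<subseteq> G \<union> S \<times> S"
    and link: "(c, d) \<in> G' \<union> G'\<inverse>"
  shows "comp G' v = (if v \<in> S then S else comp G v)"
proof -
  have closed: "comp G x \<subseteq> S" if "x \<in> S" for x
    using that comp_eq_iff unfolding S_def by blast
  have "comp G d \<subseteq> comp G' c"
    using comp_mono[OF mono, of d] comp_step[OF link] comp_eq_iff by blast
  then have S_sub: "S \<subseteq> comp G' c"
    using comp_mono[OF mono, of c] unfolding S_def by blast
  have "comp G' c \<subseteq> S"
    using comp_subset_if_closed[OF new_arcs closed, of c] unfolding S_def by simp
  then have "comp G' v = S" if "v \<in> S"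
    using S_sub that comp_eq_iff by blast
  moreover have "comp G' v = comp G v" if "v \<notin> S"
    using comp_subset_if_closed[OF new_arcs closed, of v] comp_mono[OF mono, of v] that
    by auto
  ultimately show ?thesis by simp
qed

lemma comps_join:
  assumes "c \<in> V" "d \<in> V"
    and join: "\<And>v. comp G' v = (if v \<in> comp G c \<union> comp G d then comp G c \<union> comp G d else comp G v)"
  shows "comps V G' = insert (comp G c \<union> comp G d) (comps V G - {comp G c, comp G d})"
    (is "_ = insert ?S _")
proof (intro equalityI subsetI)
  have outside: "v \<notin> ?S \<longleftrightarrow> comp G v \<noteq> comp G c \<and> comp G v \<noteq> comp G d" for v
    using comp_eq_iff by blast
  fix X
  {
    assume "X \<in> comps V G'"
    then obtain v where "v \<in> V" "X = comp G' v"
      by (auto simp: comps_def)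
    then show "X \<in> insert ?S (comps V G - {comp G c, comp G d})"
      using join[of v] outside[of v] by (auto simp: comps_def split: if_splits)
  next
    assume "X \<in> insert ?S (comps V G - {comp G c, comp G d})"
    then consider "X = ?S" | v where "v \<in> V" "X = comp G v" "v \<notin> ?S"
      using outside by (auto simp: comps_def)
    then show "X \<in> comps V G'"
    proof cases
      case 1
      then have "X = comp G' c"
        using join[of c] by simp
      then show ?thesis
        using assms(1) by (simp add: comps_def)
    next
      case 2
      then show ?thesis
        using join[of v] by (auto simp: comps_def)
    qed
  }
qed

lemma card_comps_join:
  assumes "finite V" "c \<in> V" "d \<in> V" "comp G c \<noteq> comp G d"
    and join: "\<And>v. comp G' v = (if v \<in> comp G c \<union> comp G d then comp G c \<union> comp G d else comp G v)"
  shows "card (comps V G') + 1 = card (comps V G)"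
proof -
  let ?S = "comp G c \<union> comp G d"
  have fin: "finite (comps V G)"
    using assms(1) by (simp add: comps_def)
  have two: "{comp G c, comp G d} \<subseteq> comps V G"
    using assms(2,3) by (simp add: comps_def)
  have "?S \<notin> comps V G"
  proof
    assume "?S \<in> comps V G"
    then obtain v where "?S = comp G v" by (auto simp: comps_def)
    then show False
      using assms(4) comp_eq_iff by (metis Un_iff in_comp_self)
  qed
  then have "card (comps V G') = card (comps V G - {comp G c, comp G d}) + 1"
    using comps_join[OF assms(2,3) join] fin by simp
  also have "\<dots> = card (comps V G) - 2 + 1"
    using fin two assms(4) by (simp add: card_Diff_subset)
  finally show ?thesis
    using card_mono[OF fin two] assms(4) by simp
qed

lemma comp_merge_comps:
  assumes "finite V" "inj_on A V" "G \<subseteq> V \<times> V" "a \<in> V" "b \<in> V" "comp G a \<noteq> comp G b"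
  defines "G' \<equiv> comp_merge A G (comp G a) (comp G b)"
  shows "G' \<subseteq> V \<times> V"
    and "\<And>v. comp G' v = (if v \<in> comp G a \<union> comp G b then comp G a \<union> comp G b else comp G v)"
    and "card (comps V G') + 1 = card (comps V G)"
proof -
  let ?C = "comp G a" and ?D = "comp G b"
  have C: "finite ?C" "?C \<noteq> {}" "inj_on A ?C" and D: "finite ?D" "?D \<noteq> {}" "inj_on A ?D"
    using comp_subset[OF assms(3)] assms(1,2,4,5)
    by (auto intro: finite_subset inj_on_subset)
  have sub: "G' \<subseteq> G \<union> (?C \<union> ?D) \<times> (?C \<union> ?D)"
    using comp_merge_subset[OF C D] unfolding G'_def by blast
  then show "G' \<subseteq> V \<times> V"
    using assms(3) comp_subset[OF assms(3)] assms(4,5) by blast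
  have roots: "comp G (root A ?C) = ?C" "comp G (root A ?D) = ?D"
    using root_in[OF C] root_in[OF D] comp_eq_iff by blast+
  have mono: "G \<subseteq> G'"
    by (simp add: G'_def comp_merge_def)
  have link: "(root A ?C, root A ?D) \<in> G' \<union> G'\<inverse>"
    using root_arc_comp_merge[OF C(1,2)] unfolding G'_def .
  show join: "\<And>v. comp G' v = (if v \<in> ?C \<union> ?D then ?C \<union> ?D else comp G v)"
    using comp_join[OF mono _ link, unfolded roots, OF sub] .
  show "card (comps V G') + 1 = card (comps V G)"
    using card_comps_join[OF assms(1,4,5,6) join] .
qed

lemma card_comps_merge_step:
  assumes "finite V" "inj_on A V" "G \<subseteq> V \<times> V" "set rs \<subseteq> V" "distinct (map (comp G) rs)"
  shows "card (comps V (merge_step A G rs)) + length rs div 2 = card (comps V G)"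
  using assms(3-)
proof (induction rs arbitrary: G rule: induct_list012)
  case (3 a b rs)
  define G' where "G' = comp_merge A G (comp G a) (comp G b)"
  have ab: "a \<in> V" "b \<in> V" "comp G a \<noteq> comp G b"
    using "3.prems" by auto
  note merge = comp_merge_comps[OF assms(1,2) "3.prems"(1) ab, folded G'_def]
  have "r \<notin> comp G a \<union> comp G b" if "r \<in> set rs" for r
  proof
    assume "r \<in> comp G a \<union> comp G b"
    then have "comp G r \<in> {comp G a, comp G b}"
      using comp_eq_iff by blast
    with that "3.prems"(3) show False
      by auto
  qed
  then have "map (comp G') rs = map (comp G) rs"
    using merge(2) by simp
  then have "distinct (map (comp G') rs)"
    using "3.prems"(3) by (simp only: distinct.simps list.map)
  then have "card (comps V (merge_step A G' rs)) + length rs div 2 = card (comps V G')"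
    using "3.IH"(1)[OF merge(1)] "3.prems"(2) by simp
  then show ?case
    using merge(3) by (simp add: G'_def)
qed simp_all

lemma root_comps:
  assumes "finite V" "inj_on A V" "G \<subseteq> V \<times> V" "C \<in> comps V G"
  shows "root A C \<in> C" and "comp G (root A C) = C"
proof -
  obtain v where v: "v \<in> V" "C = comp G v"
    using assms(4) unfolding comps_def by blast
  then have "finite C" "inj_on A C"
    using comp_subset[OF assms(3)] assms(1,2) by (auto intro: finite_subset inj_on_subset)
  then show "root A C \<in> C"
    using v(2) by (intro root_in) simp_all
  then show "comp G (root A C) = C"
    using v(2) comp_eq_iff by simp
qed

lemma root_list_comps:
  assumes "finite V" "inj_on A V" "G \<subseteq> V \<times> V"
    and "distinct rs" "set rs = root A ` comps V G"
  shows "set rs \<subseteq> V" and "length rs = card (comps V G)" and "distinct (map (comp G) rs)"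
proof -
  note roots = root_comps[OF assms(1-3)]
  show "set rs \<subseteq> V"
    using assms(5) roots(1) comp_subset[OF assms(3)] by (fastforce simp: comps_def)
  have "inj_on (root A) (comps V G)"
    using roots(2) by (rule inj_on_inverseI)
  then show len: "length rs = card (comps V G)"
    using assms(5) distinct_card[OF assms(4)] by (simp add: card_image)
  have "set (map (comp G) rs) = comps V G"
    using assms(5) roots(2) by force
  then show "distinct (map (comp G) rs)"
    using len by (intro card_distinct) simp
qed

lemma int_sub_half_eq_ceiling: "int (k - k div 2) = \<lceil>real k / 2\<rceil>"
proof -
  have "\<lceil>real k / 2\<rceil> = \<lceil>of_int (int k) / (of_int 2 :: real)\<rceil>" by simp
  also have "\<dots> = - (- int k div 2)" by (rule ceiling_divide_eq_div)
  finally show ?thesis by presburger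
qed

theorem lemma3:
  fixes n k :: nat and A :: "nat \<Rightarrow> real" and F :: "(nat \<times> nat) set" and rs :: "nat list"
  assumes "inj_on A {1..n}"
    and "comparison_graph n A F"
    and "und_forest {1..n} F"
    and "k = card (comps {1..n} F)"
    and "\<forall>C \<in> comps {1..n} F. \<exists>ps. ham_path F C ps"
    and "distinct rs" and "set rs = root A ` comps {1..n} F"
    and "k \<ge> 1"
  shows "(k > 1 \<longrightarrow> card (comps {1..n} (merge_step A F rs)) < k)
       \<and> int (card (comps {1..n} (merge_step A F rs))) = \<lceil>real k / 2\<rceil>"
proof -
  define V where "V = {1..n}"
  have V: "finite V" "inj_on A V" "F \<subseteq> V \<times> V"
    using assms(1,2) by (auto simp: V_def comparison_graph_def)
  note roots = root_list_comps[OF V assms(6) assms(7)[folded V_def]]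
  have "card (comps V (merge_step A F rs)) + k div 2 = k"
    using card_comps_merge_step[OF V roots(1,3)] roots(2) assms(4) unfolding V_def by simp
  then show ?thesis
    using int_sub_half_eq_ceiling[of k] assms(8) unfolding V_def by auto
qed

end
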